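(* Let $K\ge2$, let $\mathbf{p}$ be a probability vector on $[K]$ with all $p_k>0$, let $\mathbf{W}$ be a $K\times K$ invertible row-stochastic matrix, and let $\hat{\mathbf{p}}_n=\mathrm{Proj}_{\mathbb{P}}(\check{\mathbf{p}}_n)$ be an estimator as described in the context. Then $$\mathbb{E}\big[\Vert\hat{\mathbf{p}}_n-\mathbf{p}\Vert_1\big]=\sqrt{\frac{2}{\pi n}}\sum_{k=1}^K\sqrt{\nu_{2,k}-\nu_{1,k}^2}+o\Big(\frac1{\sqrt n}\Big)\quad(n\to\infty).$$
   Context: Setting: $X_1,\dots,X_n$ i.i.d. with law $\mathbf{p}$; each $X_i$ passed independently through $\mathbf{W}$ ($\Pr\{Y_i=\ell\mid X_i=k\}=W_{k,\ell}$), giving $\mathbf{y}_n$. $\mathbf{t}(\mathbf{y}_n)$ is the empirical distribution of $\mathbf{y}_n$, $\check{\mathbf{p}}_n=\mathbf{t}(\mathbf{y}_n)\mathbf{W}^{-1}$, $\mathbb{P}$ is the probability simplex, and $\mathrm{Proj}_{\mathbb{P}}$ is any fixed map from vectors with entries summing to one into $\mathbb{P}$ with $\mathrm{Proj}_{\mathbb{P}}(\mathbf{v})=\mathbf{v}$ for $\mathbf{v}\in\mathbb{P}$. $\nu_{\rho,k}=\mathbf{p}\mathbf{W}(\mathbf{W}^{-1}\odot\cdots\odot\mathbf{W}^{-1})\mathbf{e}_k^\top$ ($\rho$ Hadamard factors); $\nu_{1,k}=p_k$. *)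

theory Defs
  imports "HOL-Analysis.Analysis" "HOL-Library.Landau_Symbols"
begin

definition prob_simplex :: "(real ^ 'k::finite) set" where
  "prob_simplex = {v. (\<forall>k. v $ k \<ge> 0) \<and> (\<Sum>k\<in>UNIV. v $ k) = 1}"

definition row_stochastic :: "real ^ 'k ^ 'k::finite \<Rightarrow> bool" where
  "row_stochastic W \<longleftrightarrow> (\<forall>k l. W $ k $ l \<ge> 0) \<and> (\<forall>k. (\<Sum>l\<in>UNIV. W $ k $ l) = 1)"

definition emp_dist :: "nat \<Rightarrow> (nat \<Rightarrow> 'k::finite) \<Rightarrow> real ^ 'k" where
  "emp_dist n ys = (\<chi> l. real (card {i. i < n \<and> ys i = l}) / real n)"

definition hadamard_pow :: "nat \<Rightarrow> real ^ 'k ^ 'k::finite \<Rightarrow> real ^ 'k ^ 'k" where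
  "hadamard_pow rho M = (\<chi> i j. (M $ i $ j) ^ rho)"

definition nu :: "real ^ 'k::finite \<Rightarrow> real ^ 'k ^ 'k \<Rightarrow> nat \<Rightarrow> 'k \<Rightarrow> real" where
  "nu p W rho k = ((p v* W) v* hadamard_pow rho (matrix_inv W)) $ k"

definition l1_dist :: "real ^ 'k::finite \<Rightarrow> real ^ 'k \<Rightarrow> real" where
  "l1_dist u v = (\<Sum>k\<in>UNIV. \<bar>u $ k - v $ k\<bar>)"

text \<open>Expected L1 error of the estimator Proj(t(y_n) W^{-1}), computed exactly
  over the joint law of (X_1..X_n, Y_1..Y_n).\<close>
definition expected_l1_error ::
  "real ^ 'k::finite \<Rightarrow> real ^ 'k ^ 'k \<Rightarrow> (real ^ 'k \<Rightarrow> real ^ 'k) \<Rightarrow> nat \<Rightarrow> real" where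
  "expected_l1_error p W Proj n =
     (\<Sum>xs\<in>PiE {..<n} (\<lambda>_. UNIV). \<Sum>ys\<in>PiE {..<n} (\<lambda>_. UNIV).
        (\<Prod>i<n. p $ (xs i) * W $ (xs i) $ (ys i)) *
        l1_dist (Proj (emp_dist n ys v* matrix_inv W)) p)"

end

theory Submission
  imports Defs "HOL-Probability.Probability"
begin

text \<open>The outputs \<open>Y\<^sub>i\<close> are i.i.d. with law \<open>p W\<close>, and the unprojected estimator is
  \<open>p + (1/n) \<Sum>\<^sub>i \<xi>\<^sub>i\<close> with i.i.d. centred vectors \<open>\<xi>\<^sub>i = W\<^sup>-\<^sup>1(Y\<^sub>i, -) - p\<close>.
  The projection is the identity unless the estimator leaves the simplex, which forces its
  squared distance to \<open>p\<close> to be at least \<open>(min\<^sub>k p\<^sub>k)\<^sup>2\<close>; hence projecting costs only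
  \<open>O(E |\<Sum>\<^sub>i \<xi>\<^sub>i|\<^sup>2 / n\<^sup>2) = O(1/n)\<close>, and the error is \<open>\<Sum>\<^sub>k E |\<Sum>\<^sub>i \<xi>\<^sub>i\<^sub>k| / n + O(1/n)\<close>.
  By the central limit theorem, made applicable to \<open>|x|\<close> by the uniformly bounded second
  moments, \<open>E |\<Sum>\<^sub>i \<xi>\<^sub>i\<^sub>k| / \<surd>n \<rightarrow> \<surd>(2/\<pi>) \<sigma>\<^sub>k\<close> with \<open>\<sigma>\<^sub>k\<^sup>2 = Var \<xi>\<^sub>1\<^sub>k = \<nu>\<^sub>2\<^sub>,\<^sub>k - \<nu>\<^sub>1\<^sub>,\<^sub>k\<^sup>2\<close>.\<close>

section \<open>I.i.d. sequences over a finite alphabet\<close>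

abbreviation iid :: "'a pmf \<Rightarrow> (nat \<Rightarrow> 'a) measure" where
  "iid Q \<equiv> PiM UNIV (\<lambda>_::nat. measure_pmf Q)"

lemma product_prob_space_iid: "product_prob_space (\<lambda>_::nat. measure_pmf Q)"
  by (rule product_prob_spaceI) (simp add: measure_pmf.prob_space_axioms)

lemma has_bochner_integral_iid_restrict:
  fixes Q :: "'a::finite pmf" and g :: "(nat \<Rightarrow> 'a) \<Rightarrow> real"
  assumes "finite I"
  shows "has_bochner_integral (iid Q) (\<lambda>\<omega>. g (restrict \<omega> I))
           (\<Sum>ys\<in>PiE I (\<lambda>_. UNIV). (\<Prod>i\<in>I. pmf Q (ys i)) * g ys)"
proof -
  interpret product_prob_space "\<lambda>_::nat. measure_pmf Q" UNIV
    by (rule product_prob_space_iid)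
  define cyl where "cyl ys = prod_emb UNIV (\<lambda>_. measure_pmf Q) I (PiE I (\<lambda>i. {ys i}))"
    for ys :: "nat \<Rightarrow> 'a"
  have cyl_sets: "cyl ys \<in> sets (iid Q)" for ys
    unfolding cyl_def using assms by (intro measurable_prod_emb sets_PiM_I_finite) auto
  have "has_bochner_integral (iid Q) (\<lambda>\<omega>. \<Sum>ys\<in>PiE I (\<lambda>_. UNIV). g ys * indicator (cyl ys) \<omega>)
          (\<Sum>ys\<in>PiE I (\<lambda>_. UNIV). g ys * measure (iid Q) (cyl ys))"
    by (intro has_bochner_integral_sum has_bochner_integral_mult_right
        has_bochner_integral_real_indicator cyl_sets) (simp add: less_top[symmetric])
  moreover have "measure (iid Q) (cyl ys) = (\<Prod>i\<in>I. pmf Q (ys i))" for ys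
    unfolding cyl_def using assms by (subst measure_PiM_emb) (auto simp: measure_pmf_single)
  moreover have "(\<Sum>ys\<in>PiE I (\<lambda>_. UNIV). g ys * indicator (cyl ys) \<omega>) = g (restrict \<omega> I)"
    for \<omega> :: "nat \<Rightarrow> 'a"
  proof -
    have "indicator (cyl ys) \<omega> = (if ys = restrict \<omega> I then 1 else (0::real))"
      if "ys \<in> PiE I (\<lambda>_. UNIV)" for ys
      using that unfolding cyl_def prod_emb_def
      by (auto simp: space_PiM PiE_iff fun_eq_iff extensional_def split: split_indicator)
    then have "(\<Sum>ys\<in>PiE I (\<lambda>_. UNIV). g ys * indicator (cyl ys) \<omega>)
             = (\<Sum>ys\<in>PiE I (\<lambda>_. UNIV). if ys = restrict \<omega> I then g ys else 0)"
      by (intro sum.cong) auto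
    also have "\<dots> = g (restrict \<omega> I)"
      using assms by (subst sum.delta) (auto simp: finite_PiE)
    finally show ?thesis .
  qed
  ultimately show ?thesis
    by (simp add: mult.commute)
qed

lemma integrable_iid_restrict:
  fixes Q :: "'a::finite pmf" and f :: "(nat \<Rightarrow> 'a) \<Rightarrow> real"
  assumes "finite I" and "\<And>\<omega>. f (restrict \<omega> I) = f \<omega>"
  shows "integrable (iid Q) f"
  using has_bochner_integral_iid_restrict[OF assms(1), of Q f] assms(2)
  by (simp add: has_bochner_integral_iff)

lemma has_bochner_integral_iid_prod:
  fixes Q :: "'a::finite pmf" and f :: "nat \<Rightarrow> 'a \<Rightarrow> real"
  assumes "finite I"
  shows "has_bochner_integral (iid Q) (\<lambda>\<omega>. \<Prod>m\<in>I. f m (\<omega> m)) (\<Prod>m\<in>I. \<Sum>a\<in>UNIV. pmf Q a * f m a)"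
proof -
  have "(\<Sum>ys\<in>PiE I (\<lambda>_. UNIV). (\<Prod>i\<in>I. pmf Q (ys i)) * (\<Prod>m\<in>I. f m (ys m)))
      = (\<Prod>m\<in>I. \<Sum>a\<in>UNIV. pmf Q a * f m a)"
    using assms by (simp add: prod.distrib[symmetric] prod_sum_PiE)
  then show ?thesis
    using has_bochner_integral_iid_restrict[OF assms, of Q "\<lambda>ys. \<Prod>m\<in>I. f m (ys m)"]
    by simp
qed

lemma has_bochner_integral_iid_coordinate:
  fixes Q :: "'a::finite pmf"
  shows "has_bochner_integral (iid Q) (\<lambda>\<omega>. f (\<omega> i)) (\<Sum>a\<in>UNIV. pmf Q a * f a)"
  using has_bochner_integral_iid_prod[of "{i}" Q "\<lambda>_. f"] by simp

lemma has_bochner_integral_iid_sum_square: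
  fixes Q :: "'a::finite pmf" and z :: "'a \<Rightarrow> real"
  assumes mean_zero: "(\<Sum>a\<in>UNIV. pmf Q a * z a) = 0"
  shows "has_bochner_integral (iid Q) (\<lambda>\<omega>. (\<Sum>i<n. z (\<omega> i))\<^sup>2)
           (real n * (\<Sum>a\<in>UNIV. pmf Q a * (z a)\<^sup>2))"
proof -
  have "has_bochner_integral (iid Q) (\<lambda>\<omega>. z (\<omega> i) * z (\<omega> j))
          (if i = j then \<Sum>a\<in>UNIV. pmf Q a * (z a)\<^sup>2 else 0)" for i j
  proof (cases "i = j")
    case True
    then show ?thesis
      using has_bochner_integral_iid_coordinate[where f = "\<lambda>a. (z a)\<^sup>2" and i = i]
      by (simp add: power2_eq_square)
  next
    case False
    then show ?thesis
      using has_bochner_integral_iid_prod[of "{i, j}" Q "\<lambda>_. z"] mean_zero by simp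
  qed
  then have "has_bochner_integral (iid Q) (\<lambda>\<omega>. \<Sum>i<n. \<Sum>j<n. z (\<omega> i) * z (\<omega> j))
               (\<Sum>i<n. \<Sum>j<n. if i = j then \<Sum>a\<in>UNIV. pmf Q a * (z a)\<^sup>2 else 0)"
    by (intro has_bochner_integral_sum)
  then show ?thesis
    by (simp add: power2_eq_square sum_product)
qed

lemma indep_vars_iid_coordinates:
  fixes Q :: "'a pmf"
  shows "prob_space.indep_vars (iid Q) (\<lambda>_. measure_pmf Q) (\<lambda>i \<omega>. \<omega> i) UNIV"
proof -
  interpret product_prob_space "\<lambda>_::nat. measure_pmf Q" UNIV
    by (rule product_prob_space_iid)
  have "distr (iid Q) (measure_pmf Q) (\<lambda>\<omega>. \<omega> i) = measure_pmf Q" for i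
    by (rule PiM_component) simp
  then have "distr (iid Q) (iid Q) (\<lambda>x. \<lambda>i\<in>UNIV. x i)
               = (\<Pi>\<^sub>M i\<in>UNIV. distr (iid Q) (measure_pmf Q) (\<lambda>\<omega>. \<omega> i))"
    by (simp add: restrict_def distr_id)
  then show ?thesis
    by (subst indep_vars_iff_distr_eq_PiM) (auto intro: measurable_component_singleton)
qed

section \<open>Asymptotics of the first absolute moment\<close>

lemma abs_minus_min_le_square_div:
  fixes x T :: real
  assumes "T > 0"
  shows "\<bar>\<bar>x\<bar> - min \<bar>x\<bar> T\<bar> \<le> x\<^sup>2 / T"
proof (cases "\<bar>x\<bar> \<le> T")
  case True
  then show ?thesis using assms by simp
next
  case False
  then have "\<bar>x\<bar> * T \<le> \<bar>x\<bar> * \<bar>x\<bar>"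
    by (intro mult_left_mono) auto
  then have "\<bar>x\<bar> \<le> x\<^sup>2 / T"
    using assms by (simp add: field_simps power2_eq_square)
  then show ?thesis
    using False assms by simp
qed

lemma abs_integral_abs_minus_integral_min_le:
  fixes M :: "real measure" and T :: real
  assumes "real_distribution M" and "integrable M (\<lambda>x. x\<^sup>2)" and "T > 0"
  shows "\<bar>(\<integral>x. \<bar>x\<bar> \<partial>M) - (\<integral>x. min \<bar>x\<bar> T \<partial>M)\<bar> \<le> (\<integral>x. x\<^sup>2 \<partial>M) / T"
proof -
  interpret real_distribution M by fact
  have "integrable M (\<lambda>x. x)"
    by (rule square_integrable_imp_integrable) (use assms(2) in auto)
  then have abs_int: "integrable M (\<lambda>x. \<bar>x\<bar>)"
    by (rule integrable_abs)
  moreover have min_int: "integrable M (\<lambda>x. min \<bar>x\<bar> T)"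
    by (rule Bochner_Integration.integrable_bound[OF abs_int]) (use assms(3) in auto)
  ultimately have "(\<integral>x. \<bar>x\<bar> \<partial>M) - (\<integral>x. min \<bar>x\<bar> T \<partial>M) = (\<integral>x. \<bar>x\<bar> - min \<bar>x\<bar> T \<partial>M)"
    by (rule Bochner_Integration.integral_diff[symmetric])
  also have "\<bar>\<dots>\<bar> \<le> (\<integral>x. x\<^sup>2 / T \<partial>M)"
    using abs_int min_int assms(2,3)
    by (intro integral_abs_bound_integral Bochner_Integration.integrable_diff integrable_divide
        abs_minus_min_le_square_div)
  also have "\<dots> = (\<integral>x. x\<^sup>2 \<partial>M) / T"
    by (rule integral_divide_zero)
  finally show ?thesis .
qed

lemma integral_std_normal_abs: "(\<integral>x. \<bar>x\<bar> \<partial>std_normal_distribution) = sqrt (2 / pi)"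
proof -
  have "(\<integral>x. \<bar>x\<bar> \<partial>std_normal_distribution) = (\<integral>x. std_normal_density x * \<bar>x\<bar> ^ (2 * 0 + 1) \<partial>lborel)"
    by (subst integral_density) (auto simp: normal_density_nonneg)
  also have "\<dots> = sqrt (2 / pi)"
    by (subst integral_std_normal_moment_abs_odd) simp
  finally show ?thesis .
qed

lemma std_normal_square:
  "integrable std_normal_distribution (\<lambda>x. x\<^sup>2)" "(\<integral>x. x\<^sup>2 \<partial>std_normal_distribution) = 1"
  using std_normal_distribution_even_moments[of 1] by (simp_all add: numeral_2_eq_2)

text \<open>Bounded second moments make \<open>\<bar>x\<bar>\<close> uniformly integrable, so weak convergence carries
  over to the first absolute moment.\<close>

lemma weak_conv_std_normal_abs_moment:
  fixes \<mu> :: "nat \<Rightarrow> real measure"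
  assumes \<mu>: "\<And>n. real_distribution (\<mu> n)"
    and weak_conv: "weak_conv_m \<mu> std_normal_distribution"
    and square_integrable: "\<And>n. integrable (\<mu> n) (\<lambda>x. x\<^sup>2)"
    and second_moment_le: "\<And>n. (\<integral>x. x\<^sup>2 \<partial>\<mu> n) \<le> B"
  shows "(\<lambda>n. \<integral>x. \<bar>x\<bar> \<partial>\<mu> n) \<longlonglongrightarrow> sqrt (2 / pi)"
proof (rule LIMSEQ_I)
  fix r :: real
  assume "0 < r"
  define T where "T = 3 * (\<bar>B\<bar> + 1) / r"
  have "B * r \<le> (\<bar>B\<bar> + 1) * r"
    using \<open>0 < r\<close> by (intro mult_right_mono) auto
  then have T: "T > 0" "B / T \<le> r / 3" "1 / T \<le> r / 3"
    using \<open>0 < r\<close> by (auto simp: T_def field_simps)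
  let ?N = std_normal_distribution
  have "real_distribution ?N"
    by (rule real_dist_normal_dist)
  then have "(\<lambda>n. \<integral>x. min \<bar>x\<bar> T \<partial>\<mu> n) \<longlonglongrightarrow> (\<integral>x. min \<bar>x\<bar> T \<partial>?N)"
    using T(1) by (intro weak_conv_imp_integral_bdd_continuous_conv[OF \<mu> _ weak_conv, where B = T])
      (auto intro!: continuous_intros)
  from LIMSEQ_D[OF this, of "r / 3"] \<open>0 < r\<close> obtain n0 where
    n0: "\<And>n. n \<ge> n0 \<Longrightarrow> norm ((\<integral>x. min \<bar>x\<bar> T \<partial>\<mu> n) - (\<integral>x. min \<bar>x\<bar> T \<partial>?N)) < r / 3"
    by auto
  have truncation_\<mu>: "\<bar>(\<integral>x. \<bar>x\<bar> \<partial>\<mu> n) - (\<integral>x. min \<bar>x\<bar> T \<partial>\<mu> n)\<bar> \<le> r / 3" for n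
  proof -
    have "(\<integral>x. x\<^sup>2 \<partial>\<mu> n) / T \<le> B / T"
      using T(1) second_moment_le by (simp add: divide_right_mono)
    then show ?thesis
      using abs_integral_abs_minus_integral_min_le[OF \<mu>[of n] square_integrable[of n] T(1)] T(2)
      by linarith
  qed
  have truncation_N: "\<bar>sqrt (2 / pi) - (\<integral>x. min \<bar>x\<bar> T \<partial>?N)\<bar> \<le> r / 3"
    using abs_integral_abs_minus_integral_min_le[OF \<open>real_distribution ?N\<close>
        std_normal_square(1) T(1)] T(3)
    by (simp add: integral_std_normal_abs std_normal_square(2))
  show "\<exists>n0. \<forall>n\<ge>n0. norm ((\<integral>x. \<bar>x\<bar> \<partial>\<mu> n) - sqrt (2 / pi)) < r"
  proof (intro exI allI impI)
    fix n
    assume "n \<ge> n0"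
    then show "norm ((\<integral>x. \<bar>x\<bar> \<partial>\<mu> n) - sqrt (2 / pi)) < r"
      using truncation_\<mu>[of n] truncation_N n0[of n] unfolding real_norm_def by linarith
  qed
qed

text \<open>The second-moment hypotheses on the partial sums, which follow from the others, supply the
  uniform bound that lets weak convergence pass to the first absolute moment.\<close>

lemma (in prob_space) central_limit_theorem_abs_moment:
  fixes X :: "nat \<Rightarrow> 'a \<Rightarrow> real" and \<mu> :: "real measure" and \<sigma> :: real
  assumes X_indep: "indep_vars (\<lambda>i. borel) X UNIV"
    and X_mean_0: "\<And>n. expectation (X n) = 0"
    and \<sigma>_pos: "\<sigma> > 0"
    and X_square_integrable: "\<And>n. integrable M (\<lambda>x. (X n x)\<^sup>2)"
    and X_variance: "\<And>n. variance (X n) = \<sigma>\<^sup>2"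
    and X_distrib: "\<And>n. distr M borel (X n) = \<mu>"
    and S_square_integrable: "\<And>n. integrable M (\<lambda>x. (\<Sum>i<n. X i x)\<^sup>2)"
    and S_second_moment: "\<And>n. expectation (\<lambda>x. (\<Sum>i<n. X i x)\<^sup>2) = real n * \<sigma>\<^sup>2"
  shows "(\<lambda>n. expectation (\<lambda>x. \<bar>\<Sum>i<n. X i x\<bar>) / sqrt (real n)) \<longlonglongrightarrow> \<sigma> * sqrt (2 / pi)"
proof -
  have X_rv[measurable]: "X i \<in> borel_measurable M" for i
    using X_indep unfolding indep_vars_def2 by simp
  define \<mu>' where "\<mu>' n = distr M borel (\<lambda>x. (\<Sum>i<n. X i x) / sqrt (real n * \<sigma>\<^sup>2))" for n
  have "(\<lambda>n. \<integral>x. \<bar>x\<bar> \<partial>\<mu>' n) \<longlonglongrightarrow> sqrt (2 / pi)"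
  proof (rule weak_conv_std_normal_abs_moment)
    show "weak_conv_m \<mu>' std_normal_distribution"
      unfolding \<mu>'_def by (rule central_limit_theorem_zero_mean) (use assms in auto)
    show "real_distribution (\<mu>' n)" for n
      unfolding \<mu>'_def by (intro real_distribution_distr) measurable
    have square: "((\<Sum>i<n. X i x) / sqrt (real n * \<sigma>\<^sup>2))\<^sup>2 = (\<Sum>i<n. X i x)\<^sup>2 / (real n * \<sigma>\<^sup>2)"
      for n x by (simp add: power_divide)
    show "integrable (\<mu>' n) (\<lambda>x. x\<^sup>2)" for n
      unfolding \<mu>'_def by (subst integrable_distr_eq) (auto simp: square intro!: S_square_integrable)
    show "(\<integral>x. x\<^sup>2 \<partial>\<mu>' n) \<le> 1" for n
      unfolding \<mu>'_def by (subst integral_distr) (auto simp: square S_second_moment)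
  qed
  then have "(\<lambda>n. \<sigma> * (\<integral>x. \<bar>x\<bar> \<partial>\<mu>' n)) \<longlonglongrightarrow> \<sigma> * sqrt (2 / pi)"
    by (rule tendsto_mult_left)
  moreover have "\<sigma> * (\<integral>x. \<bar>x\<bar> \<partial>\<mu>' n) = expectation (\<lambda>x. \<bar>\<Sum>i<n. X i x\<bar>) / sqrt (real n)" for n
    unfolding \<mu>'_def using \<sigma>_pos by (subst integral_distr) (auto simp: real_sqrt_mult abs_divide)
  ultimately show ?thesis
    by simp
qed

lemma integral_iid_abs_sum_degenerate:
  fixes Q :: "'a::finite pmf" and z :: "'a \<Rightarrow> real"
  assumes "(\<Sum>a\<in>UNIV. pmf Q a * (z a)\<^sup>2) = 0"
  shows "(\<integral>\<omega>. \<bar>\<Sum>i<n. z (\<omega> i)\<bar> \<partial>iid Q) = 0"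
proof -
  have z_zero: "z a = 0" if "pmf Q a \<noteq> 0" for a
    using assms that by (subst (asm) sum_nonneg_eq_0_iff) auto
  have summand_zero: "(\<Prod>i<n. pmf Q (ys i)) * \<bar>\<Sum>i<n. z (ys i)\<bar> = 0" for ys :: "nat \<Rightarrow> 'a"
  proof (cases "\<exists>i<n. pmf Q (ys i) = 0")
    case True
    then show ?thesis by auto
  next
    case False
    then show ?thesis by (simp add: z_zero)
  qed
  have "(\<integral>\<omega>. \<bar>\<Sum>i<n. z (\<omega> i)\<bar> \<partial>iid Q)
      = (\<Sum>ys\<in>PiE {..<n} (\<lambda>_. UNIV). (\<Prod>i<n. pmf Q (ys i)) * \<bar>\<Sum>i<n. z (ys i)\<bar>)"
    using has_bochner_integral_iid_restrict[of "{..<n}" Q "\<lambda>ys. \<bar>\<Sum>i<n. z (ys i)\<bar>"]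
    by (simp add: has_bochner_integral_iff)
  also have "\<dots> = 0"
    by (rule sum.neutral) (use summand_zero in blast)
  finally show ?thesis .
qed

lemma iid_abs_sum_tendsto:
  fixes Q :: "'a::finite pmf" and z :: "'a \<Rightarrow> real"
  assumes mean_zero: "(\<Sum>a\<in>UNIV. pmf Q a * z a) = 0"
  shows "(\<lambda>n. (\<integral>\<omega>. \<bar>\<Sum>i<n. z (\<omega> i)\<bar> \<partial>iid Q) / sqrt (real n))
           \<longlonglongrightarrow> sqrt (2 / pi) * sqrt (\<Sum>a\<in>UNIV. pmf Q a * (z a)\<^sup>2)"
proof -
  define v where "v = (\<Sum>a\<in>UNIV. pmf Q a * (z a)\<^sup>2)"
  have "v \<ge> 0"
    unfolding v_def by (intro sum_nonneg) auto
  show ?thesis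
  proof (cases "v = 0")
    case True
    then show ?thesis
      using integral_iid_abs_sum_degenerate[of Q z] by (simp add: v_def)
  next
    case False
    interpret product_prob_space "\<lambda>_::nat. measure_pmf Q" UNIV
      by (rule product_prob_space_iid)
    have coordinate: "has_bochner_integral (iid Q) (\<lambda>\<omega>. f (\<omega> i)) (\<Sum>a\<in>UNIV. pmf Q a * f a)"
      for f :: "'a \<Rightarrow> real" and i
      by (rule has_bochner_integral_iid_coordinate)
    have "(\<lambda>n. expectation (\<lambda>\<omega>. \<bar>\<Sum>i<n. z (\<omega> i)\<bar>) / sqrt (real n)) \<longlonglongrightarrow> sqrt v * sqrt (2 / pi)"
    proof (rule central_limit_theorem_abs_moment)
      show "indep_vars (\<lambda>i. borel) (\<lambda>i \<omega>. z (\<omega> i)) UNIV"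
        using indep_vars_compose2[OF indep_vars_iid_coordinates[of Q], of "\<lambda>_. z" "\<lambda>_. borel"]
        by simp
      show "distr (iid Q) borel (\<lambda>\<omega>. z (\<omega> i)) = distr (measure_pmf Q) borel z" for i
      proof -
        have "distr (iid Q) borel (\<lambda>\<omega>. z (\<omega> i)) = distr (distr (iid Q) (measure_pmf Q) (\<lambda>\<omega>. \<omega> i)) borel z"
          by (subst distr_distr) (auto intro: measurable_component_singleton simp: comp_def)
        then show ?thesis
          by (subst (asm) PiM_component) auto
      qed
      show "expectation (\<lambda>\<omega>. z (\<omega> i)) = 0" for i
        using coordinate[of z i] mean_zero by (simp add: has_bochner_integral_iff)
      then show "variance (\<lambda>\<omega>. z (\<omega> i)) = (sqrt v)\<^sup>2" for i
        using coordinate[of "\<lambda>a. (z a)\<^sup>2" i] \<open>v \<ge> 0\<close> by (simp add: has_bochner_integral_iff v_def)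
      show "integrable (iid Q) (\<lambda>\<omega>. (z (\<omega> i))\<^sup>2)" for i
        using coordinate[of "\<lambda>a. (z a)\<^sup>2" i] by (simp add: has_bochner_integral_iff)
      show "integrable (iid Q) (\<lambda>\<omega>. (\<Sum>i<n. z (\<omega> i))\<^sup>2)"
        and "expectation (\<lambda>\<omega>. (\<Sum>i<n. z (\<omega> i))\<^sup>2) = real n * (sqrt v)\<^sup>2" for n
        using has_bochner_integral_iid_sum_square[OF mean_zero, of n] \<open>v \<ge> 0\<close>
        by (simp_all add: has_bochner_integral_iff v_def)
      show "sqrt v > 0"
        using \<open>v \<ge> 0\<close> False by simp
    qed
    then show ?thesis
      by (simp add: v_def mult.commute)
  qed
qed

lemma smallo_inverse_sqrt_remainder:
  fixes E a :: "nat \<Rightarrow> real"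
  assumes approx: "\<And>n. n > 0 \<Longrightarrow> \<bar>E n - a n / real n\<bar> \<le> C / real n"
    and limit: "(\<lambda>n. a n / sqrt (real n)) \<longlonglongrightarrow> c"
  shows "(\<lambda>n. E n - c / sqrt (real n)) \<in> o(\<lambda>n. 1 / sqrt (real n))"
proof (rule smalloI_tendsto)
  have sqrt_square: "sqrt (real n) * sqrt (real n) = real n" for n
    by simp
  have "(\<lambda>n. sqrt (inverse (real n))) \<longlonglongrightarrow> 0"
    using tendsto_real_sqrt[OF lim_inverse_n] by simp
  then have bound_tendsto: "(\<lambda>n. C / sqrt (real n)) \<longlonglongrightarrow> 0"
    using tendsto_mult_right_zero[of _ _ C] by (simp add: real_sqrt_inverse divide_inverse)
  have bound: "norm (sqrt (real n) * (E n - a n / real n)) \<le> C / sqrt (real n)"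
    if "n > 0" for n
  proof -
    have "norm (sqrt (real n) * (E n - a n / real n)) = sqrt (real n) * \<bar>E n - a n / real n\<bar>"
      by (simp add: abs_mult)
    also have "\<dots> \<le> sqrt (real n) * (C / real n)"
      by (rule mult_left_mono[OF approx[OF that]]) simp
    also have "\<dots> = C / sqrt (real n)"
      using that sqrt_square[of n] by (simp add: field_simps)
    finally show ?thesis .
  qed
  have rescale: "sqrt (real n) * (E n - a n / real n) + (a n / sqrt (real n) - c)
      = (E n - c / sqrt (real n)) / (1 / sqrt (real n))" if "n > 0" for n
    using that sqrt_square[of n] by (simp add: field_simps)
  have "(\<lambda>n. sqrt (real n) * (E n - a n / real n)) \<longlonglongrightarrow> 0"
    by (rule Lim_null_comparison[OF eventually_mono[OF eventually_gt_at_top[of 0] bound] bound_tendsto])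
  from tendsto_add[OF this LIM_zero[OF limit]]
  have "(\<lambda>n. sqrt (real n) * (E n - a n / real n) + (a n / sqrt (real n) - c)) \<longlonglongrightarrow> 0"
    by simp
  then show "(\<lambda>n. (E n - c / sqrt (real n)) / (1 / sqrt (real n))) \<longlonglongrightarrow> 0"
    by (rule Lim_transform_eventually[OF _ eventually_mono[OF eventually_gt_at_top[of 0] rescale]])
  show "\<forall>\<^sub>F n in sequentially. 1 / sqrt (real n) \<noteq> 0"
    by (rule eventually_mono[OF eventually_gt_at_top[of 0]]) simp
qed

section \<open>Stochastic matrices, the simplex and projections\<close>

lemma matrix_inv_inverse:
  fixes A :: "'a::semiring_1 ^ 'n ^ 'n"
  assumes "invertible A"
  shows "A ** matrix_inv A = mat 1" "matrix_inv A ** A = mat 1"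
proof -
  have "\<exists>A'. A ** A' = mat 1 \<and> A' ** A = mat 1"
    using assms unfolding invertible_def .
  then have "A ** matrix_inv A = mat 1 \<and> matrix_inv A ** A = mat 1"
    unfolding matrix_inv_def by (rule someI_ex)
  then show "A ** matrix_inv A = mat 1" "matrix_inv A ** A = mat 1"
    by auto
qed

lemma row_stochastic_matrix_inv_row_sum:
  fixes W :: "real ^ 'k ^ 'k::finite"
  assumes "row_stochastic W" and "invertible W"
  shows "(\<Sum>k\<in>UNIV. matrix_inv W $ l $ k) = 1"
proof -
  let ?one = "(\<chi> i. 1) :: real ^ 'k"
  have "W *v ?one = ?one"
    using assms(1) unfolding row_stochastic_def by (simp add: matrix_vector_mult_def vec_eq_iff)
  then have "matrix_inv W *v ?one = (matrix_inv W ** W) *v ?one"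
    by (simp add: matrix_vector_mul_assoc[symmetric])
  then have "matrix_inv W *v ?one = ?one"
    by (simp add: matrix_inv_inverse(2)[OF assms(2)])
  then show ?thesis
    by (simp add: matrix_vector_mult_def vec_eq_iff)
qed

lemma vector_matrix_mult_prob_simplex:
  fixes W :: "real ^ 'k ^ 'k::finite"
  assumes "p \<in> prob_simplex" and "row_stochastic W"
  shows "p v* W \<in> prob_simplex"
proof -
  have "(\<Sum>l\<in>UNIV. \<Sum>k\<in>UNIV. p $ k * W $ k $ l) = (\<Sum>k\<in>UNIV. p $ k * (\<Sum>l\<in>UNIV. W $ k $ l))"
    by (subst sum.swap) (simp add: sum_distrib_left)
  then show ?thesis
    using assms unfolding prob_simplex_def row_stochastic_def
    by (auto simp: vector_matrix_mult_def intro!: sum_nonneg)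
qed

definition pmf_of_simplex :: "real ^ 'k::finite \<Rightarrow> 'k pmf" where
  "pmf_of_simplex v = embed_pmf (\<lambda>k. v $ k)"

lemma pmf_pmf_of_simplex:
  assumes "v \<in> prob_simplex"
  shows "pmf (pmf_of_simplex v) k = v $ k"
  unfolding pmf_of_simplex_def using assms
  by (intro pmf_embed_pmf) (auto simp: prob_simplex_def nn_integral_count_space_finite)

lemma emp_dist_vector_matrix_mult:
  fixes B :: "real ^ 'k ^ 'k::finite"
  shows "(emp_dist n ys v* B) $ k = (\<Sum>i<n. B $ ys i $ k) / real n"
proof -
  have "real (card {i. i < n \<and> ys i = l}) * B $ l $ k = (\<Sum>i<n. if ys i = l then B $ l $ k else 0)"
    for l
    by (simp add: sum.If_cases Int_def conj_commute)
  then have "(emp_dist n ys v* B) $ k = (\<Sum>l\<in>UNIV. \<Sum>i<n. if ys i = l then B $ l $ k else 0) / real n"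
    by (simp add: vector_matrix_mult_def emp_dist_def sum_divide_distrib)
  also have "\<dots> = (\<Sum>i<n. B $ ys i $ k) / real n"
    by (subst sum.swap) simp
  finally show ?thesis .
qed

lemma emp_dist_restrict: "emp_dist n (restrict ys {..<n}) = emp_dist n ys"
proof -
  have "{i. i < n \<and> restrict ys {..<n} i = l} = {i. i < n \<and> ys i = l}" for l
    by auto
  then show ?thesis
    unfolding emp_dist_def by simp
qed

lemma l1_dist_prob_simplex_le_2:
  assumes "u \<in> prob_simplex" and "v \<in> prob_simplex"
  shows "l1_dist u v \<le> 2"
proof -
  have nonneg: "0 \<le> u $ k" "0 \<le> v $ k" for k
    using assms unfolding prob_simplex_def by auto
  have "l1_dist u v \<le> (\<Sum>k\<in>UNIV. u $ k + v $ k)"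
    unfolding l1_dist_def by (rule sum_mono) (smt (verit) nonneg)
  also have "\<dots> = 2"
    using assms unfolding prob_simplex_def by (simp add: sum.distrib)
  finally show ?thesis .
qed

text \<open>Outside the simplex some coordinate of \<open>v\<close> is negative, so \<open>v\<close> is at squared distance
  at least \<open>m\<^sup>2\<close> from \<open>p\<close>, and the quadratic bound absorbs everything.\<close>

lemma l1_dist_projection_linearization:
  fixes p v :: "real ^ 'k::finite" and Proj :: "real ^ 'k \<Rightarrow> real ^ 'k" and m :: real
  assumes p: "p \<in> prob_simplex" and m: "m > 0" "\<And>k. m \<le> p $ k"
    and Proj_simplex: "\<forall>v. (\<Sum>k\<in>UNIV. v $ k) = 1 \<longrightarrow> Proj v \<in> prob_simplex"
    and Proj_id: "\<forall>v\<in>prob_simplex. Proj v = v"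
    and v_sum: "(\<Sum>k\<in>UNIV. v $ k) = 1"
  shows "\<bar>l1_dist (Proj v) p - (\<Sum>k\<in>UNIV. \<bar>v $ k - p $ k\<bar>)\<bar>
           \<le> (2 / m\<^sup>2 + real CARD('k) / m) * (\<Sum>k\<in>UNIV. (v $ k - p $ k)\<^sup>2)"
proof (cases "v \<in> prob_simplex")
  case True
  then show ?thesis
    using Proj_id m by (auto simp: l1_dist_def intro!: mult_nonneg_nonneg sum_nonneg)
next
  case False
  define s where "s = (\<Sum>k\<in>UNIV. (v $ k - p $ k)\<^sup>2)"
  have square_le: "(v $ k - p $ k)\<^sup>2 \<le> s" for k
    unfolding s_def by (rule member_le_sum) auto
  obtain k0 where "v $ k0 < 0"
    using False v_sum unfolding prob_simplex_def by (auto simp: not_le)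
  then have "m \<le> p $ k0 - v $ k0"
    using m(2)[of k0] by linarith
  then have "m\<^sup>2 \<le> (p $ k0 - v $ k0)\<^sup>2"
    using m(1) by (intro power_mono) auto
  then have "m\<^sup>2 \<le> s"
    using square_le[of k0] by (simp add: power2_commute)
  have coordinate_le: "\<bar>v $ k - p $ k\<bar> \<le> s / m" for k
  proof -
    have "2 * (\<bar>v $ k - p $ k\<bar> * m) \<le> (v $ k - p $ k)\<^sup>2 + m\<^sup>2"
      using sum_squares_bound[of "\<bar>v $ k - p $ k\<bar>" m] by (simp add: power2_abs)
    then show ?thesis
      using square_le[of k] \<open>m\<^sup>2 \<le> s\<close> m(1) by (simp add: field_simps)
  qed
  have "(\<Sum>k\<in>UNIV. \<bar>v $ k - p $ k\<bar>) \<le> real CARD('k) * (s / m)"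
    using sum_mono[of UNIV "\<lambda>k. \<bar>v $ k - p $ k\<bar>" "\<lambda>_. s / m", OF coordinate_le] by simp
  moreover have "l1_dist (Proj v) p \<le> 2 / m\<^sup>2 * s"
  proof -
    have "l1_dist (Proj v) p \<le> 2"
      using l1_dist_prob_simplex_le_2 Proj_simplex v_sum p by blast
    also have "2 \<le> 2 / m\<^sup>2 * s"
      using \<open>m\<^sup>2 \<le> s\<close> m(1) by (simp add: field_simps)
    finally show ?thesis .
  qed
  moreover have "0 \<le> l1_dist (Proj v) p" "0 \<le> (\<Sum>k\<in>UNIV. \<bar>v $ k - p $ k\<bar>)"
    unfolding l1_dist_def by (auto intro: sum_nonneg)
  ultimately have "\<bar>l1_dist (Proj v) p - (\<Sum>k\<in>UNIV. \<bar>v $ k - p $ k\<bar>)\<bar>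
      \<le> 2 / m\<^sup>2 * s + real CARD('k) * (s / m)"
    unfolding abs_le_iff by linarith
  then show ?thesis
    unfolding s_def[symmetric] by (simp add: algebra_simps)
qed

section \<open>The estimator\<close>

locale noisy_channel =
  fixes p :: "real ^ 'k::finite" and W :: "real ^ 'k ^ 'k"
  assumes p_simplex: "p \<in> prob_simplex" and p_pos: "\<forall>k. p $ k > 0"
    and W_row_stochastic: "row_stochastic W" and W_invertible: "invertible W"
begin

definition output_pmf :: "'k pmf" where
  "output_pmf = pmf_of_simplex (p v* W)"

lemma pmf_output_pmf: "pmf output_pmf l = (p v* W) $ l"
  unfolding output_pmf_def
  by (intro pmf_pmf_of_simplex vector_matrix_mult_prob_simplex p_simplex W_row_stochastic)

lemma has_bochner_integral_expected_l1_error: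
  "has_bochner_integral (iid output_pmf)
     (\<lambda>\<omega>. l1_dist (Proj (emp_dist n \<omega> v* matrix_inv W)) p) (expected_l1_error p W Proj n)"
proof -
  have inputs_summed: "(\<Sum>xs\<in>PiE {..<n} (\<lambda>_. UNIV). \<Prod>i<n. p $ xs i * W $ xs i $ ys i)
      = (\<Prod>i<n. pmf output_pmf (ys i))" for ys
    by (simp add: prod_sum_PiE pmf_output_pmf vector_matrix_mult_def)
  have "expected_l1_error p W Proj n
      = (\<Sum>ys\<in>PiE {..<n} (\<lambda>_. UNIV). (\<Prod>i<n. pmf output_pmf (ys i))
           * l1_dist (Proj (emp_dist n ys v* matrix_inv W)) p)"
    unfolding expected_l1_error_def
    by (subst sum.swap) (simp add: sum_distrib_right[symmetric] inputs_summed)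
  then show ?thesis
    using has_bochner_integral_iid_restrict[of "{..<n}" output_pmf
        "\<lambda>ys. l1_dist (Proj (emp_dist n ys v* matrix_inv W)) p"]
    by (simp add: emp_dist_restrict)
qed

text \<open>In the notation above, \<open>\<xi>\<^sub>i\<^sub>k = score k (Y\<^sub>i)\<close>.\<close>

definition score :: "'k \<Rightarrow> 'k \<Rightarrow> real" where
  "score k l = matrix_inv W $ l $ k - p $ k"

lemma estimator_minus_p:
  assumes "n > 0"
  shows "(emp_dist n ys v* matrix_inv W) $ k - p $ k = (\<Sum>i<n. score k (ys i)) / real n"
  using assms by (simp add: emp_dist_vector_matrix_mult score_def sum_subtractf diff_divide_distrib)

lemma estimator_sum_eq_1:
  assumes "n > 0"
  shows "(\<Sum>k\<in>UNIV. (emp_dist n ys v* matrix_inv W) $ k) = 1"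
proof -
  have "(\<Sum>k\<in>UNIV. (emp_dist n ys v* matrix_inv W) $ k)
      = (\<Sum>k\<in>UNIV. \<Sum>i<n. matrix_inv W $ ys i $ k) / real n"
    by (simp add: emp_dist_vector_matrix_mult sum_divide_distrib)
  also have "\<dots> = (\<Sum>i<n. \<Sum>k\<in>UNIV. matrix_inv W $ ys i $ k) / real n"
    by (subst sum.swap) (rule refl)
  finally show ?thesis
    using assms by (simp add: row_stochastic_matrix_inv_row_sum W_row_stochastic W_invertible)
qed

lemma sum_pmf_output_pmf: "(\<Sum>l\<in>UNIV. pmf output_pmf l) = 1"
  by (rule sum_pmf_eq_1) auto

lemma output_mean_matrix_inv: "(\<Sum>l\<in>UNIV. pmf output_pmf l * matrix_inv W $ l $ k) = p $ k"
proof -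
  have "(p v* W) v* matrix_inv W = p"
    by (simp add: vector_matrix_mul_assoc matrix_inv_inverse(1)[OF W_invertible])
  then show ?thesis
    by (simp add: pmf_output_pmf vector_matrix_mult_def vec_eq_iff)
qed

lemma score_mean_zero: "(\<Sum>l\<in>UNIV. pmf output_pmf l * score k l) = 0"
  by (simp add: score_def right_diff_distrib sum_subtractf output_mean_matrix_inv
      sum_distrib_right[symmetric] sum_pmf_output_pmf)

lemma score_second_moment:
  "(\<Sum>l\<in>UNIV. pmf output_pmf l * (score k l)\<^sup>2) = nu p W 2 k - (nu p W 1 k)\<^sup>2"
proof -
  have nu_1: "nu p W 1 k = p $ k"
    using output_mean_matrix_inv[of k]
    by (simp add: nu_def hadamard_pow_def vector_matrix_mult_def pmf_output_pmf mult.commute)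
  have nu_2: "nu p W 2 k = (\<Sum>l\<in>UNIV. pmf output_pmf l * (matrix_inv W $ l $ k)\<^sup>2)"
    by (simp add: nu_def hadamard_pow_def vector_matrix_mult_def pmf_output_pmf)
  have "(\<Sum>l\<in>UNIV. pmf output_pmf l * (score k l)\<^sup>2)
      = (\<Sum>l\<in>UNIV. pmf output_pmf l * (matrix_inv W $ l $ k)\<^sup>2)
        - 2 * p $ k * (\<Sum>l\<in>UNIV. pmf output_pmf l * matrix_inv W $ l $ k)
        + (p $ k)\<^sup>2 * (\<Sum>l\<in>UNIV. pmf output_pmf l)"
    by (simp add: score_def power2_eq_square algebra_simps sum.distrib sum_subtractf
        sum_distrib_left)
  then show ?thesis
    unfolding nu_1 nu_2 by (simp add: output_mean_matrix_inv sum_pmf_output_pmf power2_eq_square)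
qed

lemma l1_error_linearization:
  fixes Proj :: "real ^ 'k \<Rightarrow> real ^ 'k"
  assumes Proj_simplex: "\<forall>v. (\<Sum>k\<in>UNIV. v $ k) = 1 \<longrightarrow> Proj v \<in> prob_simplex"
    and Proj_id: "\<forall>v\<in>prob_simplex. Proj v = v"
  obtains L where "\<And>n \<omega>. n > 0 \<Longrightarrow>
    \<bar>l1_dist (Proj (emp_dist n \<omega> v* matrix_inv W)) p
      - (\<Sum>k\<in>UNIV. \<bar>\<Sum>i<n. score k (\<omega> i)\<bar>) / real n\<bar>
    \<le> L * (\<Sum>k\<in>UNIV. (\<Sum>i<n. score k (\<omega> i))\<^sup>2) / (real n)\<^sup>2"
proof -
  define m where "m = Min (range (\<lambda>k. p $ k))"
  have m: "m > 0" "\<And>k. m \<le> p $ k"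
    unfolding m_def using p_pos by auto
  show thesis
  proof (rule that)
    fix n :: nat and \<omega> :: "nat \<Rightarrow> 'k"
    assume "n > 0"
    define S where "S k = (\<Sum>i<n. score k (\<omega> i))" for k
    have "(emp_dist n \<omega> v* matrix_inv W) $ k - p $ k = S k / real n" for k
      unfolding S_def by (rule estimator_minus_p[OF \<open>n > 0\<close>])
    then have "\<bar>l1_dist (Proj (emp_dist n \<omega> v* matrix_inv W)) p - (\<Sum>k\<in>UNIV. \<bar>S k / real n\<bar>)\<bar>
        \<le> (2 / m\<^sup>2 + real CARD('k) / m) * (\<Sum>k\<in>UNIV. (S k / real n)\<^sup>2)"
      using l1_dist_projection_linearization[OF p_simplex m Proj_simplex Proj_id
          estimator_sum_eq_1[OF \<open>n > 0\<close>, of \<omega>]]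
      by simp
    then show "\<bar>l1_dist (Proj (emp_dist n \<omega> v* matrix_inv W)) p - (\<Sum>k\<in>UNIV. \<bar>S k\<bar>) / real n\<bar>
        \<le> (2 / m\<^sup>2 + real CARD('k) / m) * (\<Sum>k\<in>UNIV. (S k)\<^sup>2) / (real n)\<^sup>2"
      by (simp add: abs_divide power_divide sum_divide_distrib[symmetric] mult.assoc)
  qed
qed

lemma expected_l1_error_linearization:
  fixes Proj :: "real ^ 'k \<Rightarrow> real ^ 'k"
  assumes "\<forall>v. (\<Sum>k\<in>UNIV. v $ k) = 1 \<longrightarrow> Proj v \<in> prob_simplex"
    and "\<forall>v\<in>prob_simplex. Proj v = v"
  obtains C where "\<And>n. n > 0 \<Longrightarrow>
    \<bar>expected_l1_error p W Proj n
      - (\<Sum>k\<in>UNIV. \<integral>\<omega>. \<bar>\<Sum>i<n. score k (\<omega> i)\<bar> \<partial>iid output_pmf) / real n\<bar> \<le> C / real n"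
proof -
  obtain L where pointwise: "\<And>n \<omega>. n > 0 \<Longrightarrow>
    \<bar>l1_dist (Proj (emp_dist n \<omega> v* matrix_inv W)) p
      - (\<Sum>k\<in>UNIV. \<bar>\<Sum>i<n. score k (\<omega> i)\<bar>) / real n\<bar>
    \<le> L * (\<Sum>k\<in>UNIV. (\<Sum>i<n. score k (\<omega> i))\<^sup>2) / (real n)\<^sup>2"
    using l1_error_linearization[OF assms] by blast
  define V where "V k = (\<Sum>l\<in>UNIV. pmf output_pmf l * (score k l)\<^sup>2)" for k
  define S where "S n k \<omega> = (\<Sum>i<n. score k (\<omega> i))" for n k and \<omega> :: "nat \<Rightarrow> 'k"
  define H where "H n \<omega> = l1_dist (Proj (emp_dist n \<omega> v* matrix_inv W)) p" for n and \<omega> :: "nat \<Rightarrow> 'k"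
  have H: "has_bochner_integral (iid output_pmf) (H n) (expected_l1_error p W Proj n)" for n
    unfolding H_def by (rule has_bochner_integral_expected_l1_error)
  have S_abs_integrable: "integrable (iid output_pmf) (\<lambda>\<omega>. \<bar>S n k \<omega>\<bar>)" for n k
    unfolding S_def by (rule integrable_iid_restrict[of "{..<n}"]) auto
  have S_square: "has_bochner_integral (iid output_pmf) (\<lambda>\<omega>. (S n k \<omega>)\<^sup>2) (real n * V k)" for n k
    unfolding S_def V_def by (rule has_bochner_integral_iid_sum_square[OF score_mean_zero])
  have "\<bar>expected_l1_error p W Proj n - (\<Sum>k\<in>UNIV. \<integral>\<omega>. \<bar>S n k \<omega>\<bar> \<partial>iid output_pmf) / real n\<bar>
      \<le> L * (\<Sum>k\<in>UNIV. V k) / real n" if "n > 0" for n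
  proof -
    have "expected_l1_error p W Proj n - (\<Sum>k\<in>UNIV. \<integral>\<omega>. \<bar>S n k \<omega>\<bar> \<partial>iid output_pmf) / real n
        = (\<integral>\<omega>. H n \<omega> - (\<Sum>k\<in>UNIV. \<bar>S n k \<omega>\<bar>) / real n \<partial>iid output_pmf)"
      using H S_abs_integrable by (simp add: has_bochner_integral_iff)
    also have "\<bar>\<dots>\<bar> \<le> (\<integral>\<omega>. \<bar>H n \<omega> - (\<Sum>k\<in>UNIV. \<bar>S n k \<omega>\<bar>) / real n\<bar> \<partial>iid output_pmf)"
      by (rule integral_abs_bound)
    also have "\<dots> \<le> (\<integral>\<omega>. L * (\<Sum>k\<in>UNIV. (S n k \<omega>)\<^sup>2) / (real n)\<^sup>2 \<partial>iid output_pmf)"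
    proof (rule integral_mono)
      show "integrable (iid output_pmf) (\<lambda>\<omega>. \<bar>H n \<omega> - (\<Sum>k\<in>UNIV. \<bar>S n k \<omega>\<bar>) / real n\<bar>)"
        using H S_abs_integrable by (intro integrable_abs) (auto simp: has_bochner_integral_iff)
      show "integrable (iid output_pmf) (\<lambda>\<omega>. L * (\<Sum>k\<in>UNIV. (S n k \<omega>)\<^sup>2) / (real n)\<^sup>2)"
        using S_square by (auto simp: has_bochner_integral_iff)
      show "\<bar>H n \<omega> - (\<Sum>k\<in>UNIV. \<bar>S n k \<omega>\<bar>) / real n\<bar> \<le> L * (\<Sum>k\<in>UNIV. (S n k \<omega>)\<^sup>2) / (real n)\<^sup>2"
        for \<omega>
        using pointwise[OF that, of \<omega>] by (simp add: H_def S_def)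
    qed
    also have "\<dots> = L * (\<Sum>k\<in>UNIV. real n * V k) / (real n)\<^sup>2"
      using S_square by (simp add: has_bochner_integral_iff)
    also have "\<dots> = L * (\<Sum>k\<in>UNIV. V k) / real n"
      by (simp add: sum_distrib_left[symmetric] power2_eq_square)
    finally show ?thesis .
  qed
  then show thesis
    using that[of "L * (\<Sum>k\<in>UNIV. V k)"] by (simp add: S_def)
qed

end

theorem theorem4:
  fixes p :: "real ^ 'k::finite"
    and W :: "real ^ 'k ^ 'k"
    and Proj :: "real ^ 'k \<Rightarrow> real ^ 'k"
  assumes "CARD('k) \<ge> 2"
    and "p \<in> prob_simplex" and "\<forall>k. p $ k > 0"
    and "row_stochastic W" and "invertible W"
    and "\<forall>v. (\<Sum>k\<in>UNIV. v $ k) = 1 \<longrightarrow> Proj v \<in> prob_simplex"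
    and "\<forall>v\<in>prob_simplex. Proj v = v"
  shows "(\<lambda>n. expected_l1_error p W Proj n
             - sqrt (2 / (pi * real n)) * (\<Sum>k\<in>UNIV. sqrt (nu p W 2 k - (nu p W 1 k)\<^sup>2)))
         \<in> o(\<lambda>n. 1 / sqrt (real n))"
proof -
  interpret noisy_channel p W
    using assms(2-5) by unfold_locales
  let ?A = "\<lambda>n. \<Sum>k\<in>UNIV. \<integral>\<omega>. \<bar>\<Sum>i<n. score k (\<omega> i)\<bar> \<partial>iid output_pmf"
  let ?\<sigma> = "\<lambda>k. sqrt (nu p W 2 k - (nu p W 1 k)\<^sup>2)"
  obtain C where "\<And>n. n > 0 \<Longrightarrow> \<bar>expected_l1_error p W Proj n - ?A n / real n\<bar> \<le> C / real n"
    using expected_l1_error_linearization assms(6,7) by blast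
  moreover have "(\<lambda>n. ?A n / sqrt (real n)) \<longlonglongrightarrow> (\<Sum>k\<in>UNIV. sqrt (2 / pi) * ?\<sigma> k)"
    unfolding sum_divide_distrib
    by (intro tendsto_sum) (use iid_abs_sum_tendsto[OF score_mean_zero] in \<open>simp add: score_second_moment\<close>)
  ultimately have "(\<lambda>n. expected_l1_error p W Proj n - (\<Sum>k\<in>UNIV. sqrt (2 / pi) * ?\<sigma> k) / sqrt (real n))
      \<in> o(\<lambda>n. 1 / sqrt (real n))"
    by (rule smallo_inverse_sqrt_remainder)
  moreover have "sqrt (2 / (pi * real n)) * (\<Sum>k\<in>UNIV. ?\<sigma> k) = (\<Sum>k\<in>UNIV. sqrt (2 / pi) * ?\<sigma> k) / sqrt (real n)"
    for n
    by (simp add: real_sqrt_divide real_sqrt_mult sum_distrib_left sum_divide_distrib)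
  ultimately show ?thesis
    by simp
qed

end
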